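(* Let $q\ge5$ be odd with $q\equiv\xi\pmod3$. (i) If $\xi=-1$, then $V_2=1$ and $V_1=(q-1)/2$. (ii) If $\xi=1$ and $2$ is a non-cube in $\mathbb F_q$, then $V_2=0$ and $V_1=\mathcal N_q$. (iii) If $\xi=1$ and $2$ is a cube in $\mathbb F_q$, then $V_2=3$ and $V_1=\mathcal N_q$.
   Context: For $m\in\{0,1,2,3\}$, $V_m$ is the number of $\beta\in\mathbb F_q$ such that the cubic equation $t^3-3\beta t^2-1=0$ has exactly $m$ distinct solutions $t\in\mathbb F_q$. $\mathcal N_q=\#\{\beta\in\mathbb F_q: 1+4\beta^3\text{ is a non-square in }\mathbb F_q\}$. *)

theory Defs
  imports Main "HOL-Library.Cardinality"
begin

text \<open>The finite field F_q is modelled as a type 'a of class {finite, field}, q = CARD('a).\<close>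

definition cubic_sols :: "'a::field \<Rightarrow> 'a set" where
  "cubic_sols \<beta> = {t. t^3 - 3 * \<beta> * t^2 - 1 = 0}"

definition V :: "'a::{finite,field} itself \<Rightarrow> nat \<Rightarrow> nat" where
  "V _ m = card {\<beta>::'a. card (cubic_sols \<beta>) = m}"

definition N :: "'a::{finite,field} itself \<Rightarrow> nat" where
  "N _ = card {\<beta>::'a. \<not> (\<exists>y. y^2 = 1 + 4 * \<beta>^3)}"

end

theory Submission
  imports Defs "HOL-Number_Theory.Residues" "HOL-Computational_Algebra.Polynomial"
begin

text \<open>
  Substituting \<open>t = 1/s\<close> turns \<open>t^3 - 3\<beta>t^2 - 1\<close> into the depressed cubic \<open>s^3 + 3\<beta>s - 1\<close>.
  Splitting off a root \<open>r\<close> leaves a quadratic whose discriminant is \<open>-3(1 + 4\<beta>^3)\<close> up to the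
  square factor \<open>(r^2 + \<beta>)^2\<close>, so a cubic with a root has exactly two roots iff \<open>1 + 4\<beta>^3 = 0\<close>
  and exactly one iff \<open>-3(1 + 4\<beta>^3)\<close> is a non-square. Whether \<open>-3\<close> is a square is decided
  by the cube roots of unity, i.e. by \<open>q mod 3\<close>. It remains to see when a root exists: for
  \<open>q = 2 mod 3\<close> cubing is bijective and Cardano's formula gives a root whenever \<open>1 + 4\<beta>^3\<close> is
  a square; for \<open>q = 1 mod 3\<close> and a non-square \<open>D = 1 + 4\<beta>^3\<close>, Cardano's formula is carried out
  in \<open>F(sqrt D)\<close>, taking the cube root in the norm-one group, on which cubing is injective because
  \<open>-3\<close> is a square. Finally \<open>1 + 4\<beta>^3 = 0\<close> iff \<open>(-2\<beta>)^3 = 2\<close>.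
\<close>

lemma of_nat_prime_neq_zero:
  assumes "prime p" and "\<not> p dvd CARD('a::{finite,field})"
  shows "(of_nat p :: 'a) \<noteq> 0"
proof
  assume "(of_nat p :: 'a) = 0"
  then have "CHAR('a) dvd p" by (simp only: of_nat_eq_0_iff_char_dvd)
  moreover have "CHAR('a) \<noteq> 1" by simp
  ultimately have "CHAR('a) = p" using assms(1) by (metis prime_nat_iff)
  with CHAR_dvd_CARD[where 'a='a] assms(2) show False by simp
qed

lemma power_card_minus_one_eq_one:
  fixes a :: "'a::{finite,field}"
  assumes "a \<noteq> 0"
  shows "a ^ (CARD('a) - 1) = 1"
proof -
  let ?U = "UNIV - {0::'a}"
  have inj: "inj_on ((*) a) ?U" using assms by (auto intro: inj_onI)
  have "(*) a ` ?U = ?U" using assms by (intro endo_inj_surj inj) auto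
  then have "\<Prod>?U = (\<Prod>x\<in>?U. a * x)"
    using prod.reindex[OF inj, of id] by simp
  also have "\<dots> = a ^ card ?U * \<Prod>?U" by (simp add: prod.distrib)
  finally have "a ^ card ?U = 1" by (simp add: prod_zero_iff)
  then show ?thesis by (simp add: card_Diff_singleton)
qed

section \<open>Cube roots of unity and squares\<close>

lemma inj_cube:
  assumes "\<And>\<omega>::'a::field. \<omega>^3 = 1 \<Longrightarrow> \<omega> = 1"
  shows "inj (\<lambda>x::'a. x^3)"
proof (rule injI)
  fix x y :: 'a
  assume xy: "x^3 = y^3"
  show "x = y"
  proof (cases "y = 0")
    case False
    with xy have "(x / y)^3 = 1" by (simp add: power_divide)
    with False assms show ?thesis by fastforce
  qed (use xy in simp)
qed

lemma cube_root_of_unity_eq_one: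
  assumes "CARD('a::{finite,field}) mod 3 = 2" and "(\<omega>::'a)^3 = 1"
  shows "\<omega> = 1"
proof -
  have "CARD('a) - 1 = 3 * (CARD('a) div 3) + 1" using assms(1) by presburger
  then have "\<omega> ^ (CARD('a) - 1) = \<omega>"
    using assms(2) by (simp add: power_add power_mult)
  moreover have "\<omega> \<noteq> 0" using assms(2) by auto
  ultimately show ?thesis using power_card_minus_one_eq_one by metis
qed

lemma nontrivial_cube_root_of_unity_exists:
  assumes "CARD('a::{finite,field}) mod 3 = 1"
  shows "\<exists>\<omega>::'a. \<omega>^3 = 1 \<and> \<omega> \<noteq> 1"
proof (rule ccontr)
  assume trivial: "\<not> (\<exists>\<omega>::'a. \<omega>^3 = 1 \<and> \<omega> \<noteq> 1)"
  define m where "m = (CARD('a) - 1) div 3"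
  have "2 \<le> CARD('a)" using card_mono[of UNIV "{0::'a, 1}"] by simp
  then have "CARD('a) - 1 = 3 * m \<and> m \<ge> 1" using assms unfolding m_def by presburger
  then have m: "CARD('a) - 1 = 3 * m" "m \<ge> 1" by auto
  define p :: "'a poly" where "p = monom 1 m - 1"
  have p_eval: "poly p x = x^m - 1" for x by (simp add: p_def poly_monom)
  have "p \<noteq> 0" using p_eval[of 0] m(2) by (auto simp: power_0_left)
  have "degree p \<le> m" unfolding p_def by (intro degree_diff_le) (simp_all add: degree_monom_le)
  have "UNIV - {0} \<subseteq> {x::'a. poly p x = 0}"
  proof
    fix a :: 'a assume "a \<in> UNIV - {0}"
    then have "(a^m)^3 = 1"
      using power_card_minus_one_eq_one[of a] m(1) by (simp add: power_mult[symmetric] mult.commute)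
    with trivial show "a \<in> {x. poly p x = 0}" by (auto simp: p_eval)
  qed
  then have "card (UNIV - {0::'a}) \<le> card {x. poly p x = 0}" by (intro card_mono) simp_all
  also have "\<dots> \<le> m" using card_poly_roots_bound[OF \<open>p \<noteq> 0\<close>] \<open>degree p \<le> m\<close> by simp
  finally show False using m by (simp add: card_Diff_singleton)
qed

lemma nontrivial_cube_root_of_unity_iff:
  assumes "(3::'a::field) \<noteq> 0"
  shows "\<omega>^3 = 1 \<and> \<omega> \<noteq> 1 \<longleftrightarrow> \<omega>^2 + \<omega> + 1 = (0::'a)"
proof -
  have "\<omega>^3 - 1 = (\<omega> - 1) * (\<omega>^2 + \<omega> + 1)" by (simp add: algebra_simps power2_eq_square power3_eq_cube)
  then show ?thesis using assms by auto
qed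

lemma minus_three_square_iff:
  assumes "(2::'a::field) \<noteq> 0" and "(3::'a) \<noteq> 0"
  shows "(\<exists>e::'a. e^2 = -3) \<longleftrightarrow> (\<exists>\<omega>::'a. \<omega>^3 = 1 \<and> \<omega> \<noteq> 1)"
proof -
  have four: "(4::'a) \<noteq> 0" using assms(1) by (metis mult_2 mult_eq_0_iff numeral_Bit0 one_add_one)
  have sq: "(2 * \<omega> + 1)^2 = -3 \<longleftrightarrow> \<omega>^2 + \<omega> + 1 = 0" for \<omega> :: 'a
  proof -
    have "(2 * \<omega> + 1)^2 = -3 \<longleftrightarrow> (2 * \<omega> + 1)^2 + 3 = 0" by (simp add: eq_neg_iff_add_eq_0)
    also have "(2 * \<omega> + 1)^2 + 3 = 4 * (\<omega>^2 + \<omega> + 1)" by (simp add: algebra_simps power2_eq_square)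
    finally show ?thesis using four by (simp only: mult_eq_0_iff simp_thms)
  qed
  have "e = 2 * ((e - 1) / 2) + 1" for e :: 'a
    using assms(1) by (simp add: field_simps)
  then have "(\<exists>e::'a. e^2 = -3) \<longleftrightarrow> (\<exists>\<omega>::'a. (2 * \<omega> + 1)^2 = -3)" by (metis (no_types))
  then show ?thesis by (simp only: sq nontrivial_cube_root_of_unity_iff[OF assms(2)])
qed

lemma card_cube_roots_of_unity:
  assumes "(\<omega>::'a::field)^3 = 1" and "\<omega> \<noteq> 1"
  shows "card {x::'a. x^3 = 1} = 3"
proof -
  have "(\<omega> - 1) * (\<omega>^2 + \<omega> + 1) = \<omega>^3 - 1" by (simp add: algebra_simps power2_eq_square power3_eq_cube)
  with assms have \<omega>: "\<omega>^2 + \<omega> + 1 = 0" by simp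
  have "x^3 = 1 \<longleftrightarrow> x = 1 \<or> x = \<omega> \<or> x = \<omega>^2" for x :: 'a
  proof -
    have "(x - 1) * (x - \<omega>) * (x - \<omega>^2)
        = x^3 - (\<omega>^2 + \<omega> + 1) * x^2 + (\<omega>^2 + \<omega> + 1) * \<omega> * x - \<omega>^3"
      by (simp add: algebra_simps power2_eq_square power3_eq_cube)
    also have "\<dots> = x^3 - 1" using \<omega> assms(1) by simp
    finally have "x^3 - 1 = (x - 1) * (x - \<omega>) * (x - \<omega>^2)" ..
    then show ?thesis by (metis eq_iff_diff_eq_0 mult_eq_0_iff)
  qed
  then have "{x::'a. x^3 = 1} = {1, \<omega>, \<omega>^2}" by auto
  moreover have "\<omega>^2 \<noteq> 1"
  proof
    assume "\<omega>^2 = 1"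
    then have "\<omega>^3 = \<omega>" by (simp add: power3_eq_cube power2_eq_square)
    with assms show False by simp
  qed
  moreover have "\<omega>^2 \<noteq> \<omega>" using assms by (auto simp: power2_eq_square)
  ultimately show ?thesis using assms(2) by simp
qed

lemma card_cube_roots:
  assumes "(c::'a::field)^3 = a" and "c \<noteq> 0"
  shows "card {x::'a. x^3 = a} = card {x::'a. x^3 = 1}"
proof -
  have "{x. x^3 = a} = (*) c ` {x. x^3 = 1}"
  proof (intro equalityI subsetI)
    fix x assume "x \<in> {x. x^3 = a}"
    moreover have "a \<noteq> 0" using assms by auto
    ultimately have "(x / c)^3 = 1" "x = c * (x / c)" using assms by (simp_all add: power_divide)
    then show "x \<in> (*) c ` {x. x^3 = 1}" by blast
  qed (use assms in \<open>auto simp: power_mult_distrib\<close>)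
  moreover have "inj_on ((*) c) A" for A using assms(2) by (auto intro: inj_onI)
  ultimately show ?thesis by (simp add: card_image)
qed

lemma card_nonzero_squares:
  assumes "(2::'a::{finite,field}) \<noteq> 0"
  shows "2 * card {y::'a. y \<noteq> 0 \<and> (\<exists>z. z^2 = y)} = CARD('a) - 1"
proof -
  define S where "S = {y::'a. y \<noteq> 0 \<and> (\<exists>z. z^2 = y)}"
  have fibre: "card {z::'a. z^2 = y} = 2" if "y \<in> S" for y
  proof -
    obtain z where z: "z \<noteq> 0" "y = z^2" using \<open>y \<in> S\<close> by (auto simp: S_def)
    then have "z \<noteq> -z" using assms by (metis add_eq_0_iff mult_2 mult_eq_0_iff)
    moreover have "{w. w^2 = y} = {z, -z}" using z by (auto simp: power2_eq_iff)
    ultimately show ?thesis by simp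
  qed
  have "UNIV - {0::'a} = (\<Union>y\<in>S. {z. z^2 = y})" by (auto simp: S_def)
  then have "card (UNIV - {0::'a}) = (\<Sum>y\<in>S. card {z::'a. z^2 = y})"
    by (simp add: card_UN_disjoint disjoint_iff)
  also have "\<dots> = 2 * card S" using fibre by simp
  finally show ?thesis by (simp add: card_Diff_singleton S_def)
qed

lemma card_squares:
  assumes "(2::'a::{finite,field}) \<noteq> 0"
  shows "2 * card (range (\<lambda>z::'a. z^2)) = CARD('a) + 1"
proof -
  have "range (\<lambda>z::'a. z^2) = insert 0 {y::'a. y \<noteq> 0 \<and> (\<exists>z. z^2 = y)}"
    by (auto intro: range_eqI[of _ _ 0])
  then show ?thesis using card_nonzero_squares[OF assms] by simp
qed

lemma nonsquare_mult_nonsquare: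
  fixes n m :: "'a::{finite,field}"
  assumes "(2::'a) \<noteq> 0" and n: "\<not> (\<exists>y. y^2 = n)" and m: "\<not> (\<exists>y. y^2 = m)"
  shows "\<exists>y. y^2 = n * m"
proof -
  define S where "S = {y::'a. y \<noteq> 0 \<and> (\<exists>z. z^2 = y)}"
  define NS where "NS = {y::'a. y \<noteq> 0 \<and> \<not> (\<exists>z. z^2 = y)}"
  have "S \<union> NS = UNIV - {0}" "S \<inter> NS = {}" by (auto simp: S_def NS_def)
  then have "card S + card NS = CARD('a) - 1"
    by (metis card_Diff_singleton card_Un_disjoint finite iso_tuple_UNIV_I)
  with card_nonzero_squares[OF assms(1)] have "card NS = card S" unfolding S_def by simp
  have "n \<noteq> 0" using n by (metis power_zero_numeral)
  have "(*) n ` S \<subseteq> NS"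
  proof
    fix y assume "y \<in> (*) n ` S"
    then obtain z where "z \<noteq> 0" and y: "y = n * z^2" by (auto simp: S_def)
    have "\<not> (\<exists>w. w^2 = y)"
    proof
      assume "\<exists>w. w^2 = y"
      then obtain w where "w^2 = y" by blast
      then have "(w / z)^2 = n" using y \<open>z \<noteq> 0\<close> by (simp add: power_divide)
      with n show False by blast
    qed
    with \<open>z \<noteq> 0\<close> \<open>n \<noteq> 0\<close> y show "y \<in> NS" by (simp add: NS_def)
  qed
  moreover have "card ((*) n ` S) = card NS"
    using \<open>n \<noteq> 0\<close> \<open>card NS = card S\<close> by (simp add: card_image inj_on_def)
  ultimately have "(*) n ` S = NS" by (intro card_subset_eq) simp_all
  moreover have "m \<in> NS" using m by (auto simp: NS_def)
  ultimately obtain z where "m = n * z^2" by (auto simp: S_def)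
  then have "(n * z)^2 = n * m" by (simp add: power2_eq_square)
  then show ?thesis by blast
qed

lemma ex_square_minus_mult_square:
  fixes D c :: "'a::{finite,field}"
  assumes "(2::'a) \<noteq> 0" and "D \<noteq> 0"
  shows "\<exists>a b. a^2 - D * b^2 = c"
proof -
  define A where "A = range (\<lambda>z::'a. z^2)"
  define B where "B = (\<lambda>x. c + D * x) ` A"
  have "card B = card A" unfolding B_def using assms(2) by (intro card_image inj_onI) simp
  moreover have "2 * card A = CARD('a) + 1" using card_squares[OF assms(1)] by (simp add: A_def)
  moreover have "card (A \<union> B) \<le> CARD('a)" by (rule card_mono) simp_all
  ultimately have "A \<inter> B \<noteq> {}" by (auto simp: card_Un_disjoint)
  then obtain a b where "a^2 = c + D * b^2" by (auto simp: A_def B_def)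
  then have "a^2 - D * b^2 = c" by simp
  then show ?thesis by blast
qed

section \<open>Roots of the depressed cubic\<close>

lemma quadratic_roots:
  assumes "(2::'a::field) \<noteq> 0"
  shows "{s::'a. s^2 + b * s + c = 0} = (\<lambda>e. (e - b) / 2) ` {e. e^2 = b^2 - 4 * c}"
proof -
  have "(4::'a) \<noteq> 0" using assms by (metis mult_2 mult_eq_0_iff numeral_Bit0 one_add_one)
  have root_iff: "s^2 + b * s + c = 0 \<longleftrightarrow> (2 * s + b)^2 = b^2 - 4 * c" for s :: 'a
  proof -
    have "(2 * s + b)^2 = b^2 - 4 * c \<longleftrightarrow> (2 * s + b)^2 - (b^2 - 4 * c) = 0"
      by (rule eq_iff_diff_eq_0)
    also have "(2 * s + b)^2 - (b^2 - 4 * c) = 4 * (s^2 + b * s + c)"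
      by (simp add: algebra_simps power2_eq_square)
    finally show ?thesis using \<open>(4::'a) \<noteq> 0\<close> by (simp only: mult_eq_0_iff simp_thms)
  qed
  show ?thesis
  proof (intro equalityI subsetI)
    fix s assume "s \<in> {s. s^2 + b * s + c = 0}"
    then have "(2 * s + b)^2 = b^2 - 4 * c" using root_iff by simp
    moreover have "s = ((2 * s + b) - b) / 2" using assms by simp
    ultimately show "s \<in> (\<lambda>e. (e - b) / 2) ` {e. e^2 = b^2 - 4 * c}" by blast
  next
    fix s assume "s \<in> (\<lambda>e. (e - b) / 2) ` {e. e^2 = b^2 - 4 * c}"
    then obtain e where "e^2 = b^2 - 4 * c" and "s = (e - b) / 2" by blast
    moreover from \<open>s = (e - b) / 2\<close> have "2 * s + b = e" using assms by (simp add: field_simps)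
    ultimately show "s \<in> {s. s^2 + b * s + c = 0}" using root_iff by simp
  qed
qed

lemma depressed_cubic_roots_insert:
  fixes \<beta> r :: "'a::field"
  assumes "r^3 + 3 * \<beta> * r - 1 = 0"
  shows "{s. s^3 + 3 * \<beta> * s - 1 = 0} = insert r {s. s^2 + r * s + (r^2 + 3 * \<beta>) = 0}"
proof -
  have "s^3 + 3 * \<beta> * s - 1 = (s - r) * (s^2 + r * s + (r^2 + 3 * \<beta>)) + (r^3 + 3 * \<beta> * r - 1)"
    for s :: 'a by (simp add: algebra_simps power2_eq_square power3_eq_cube)
  then have "s^3 + 3 * \<beta> * s - 1 = (s - r) * (s^2 + r * s + (r^2 + 3 * \<beta>))" for s
    using assms by simp
  then show ?thesis by auto
qed

lemma depressed_cubic_discriminant: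
  fixes \<beta> r :: "'a::field"
  assumes "r^3 + 3 * \<beta> * r - 1 = 0"
  shows "-3 * (1 + 4 * \<beta>^3) = (r^2 + \<beta>)^2 * (r^2 - 4 * (r^2 + 3 * \<beta>))"
proof -
  have "(r^2 + \<beta>)^2 * (r^2 - 4 * (r^2 + 3 * \<beta>)) = -3 * ((r^3 + 3 * \<beta> * r)^2 + 4 * \<beta>^3)"
    by (simp add: algebra_simps power2_eq_square power3_eq_cube)
  also have "r^3 + 3 * \<beta> * r = 1" using assms by simp
  finally show ?thesis by simp
qed

lemma depressed_cubic_root_if_discriminant_zero:
  fixes \<beta> :: "'a::field"
  assumes "(2::'a) \<noteq> 0" and "1 + 4 * \<beta>^3 = 0"
  shows "(1 / (2 * \<beta>))^3 + 3 * \<beta> * (1 / (2 * \<beta>)) - 1 = 0"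
proof -
  have "\<beta> \<noteq> 0" using assms(2) by auto
  have "(2 * \<beta>)^3 = 2 * (4 * \<beta>^3)" by (simp add: power_mult_distrib)
  also have "4 * \<beta>^3 = -1" using assms(2) by (simp add: eq_neg_iff_add_eq_0 add.commute)
  finally have "(2 * \<beta>)^3 = -2" by simp
  then have "(1 / (2 * \<beta>))^3 = -1 / 2" by (simp add: power_divide)
  moreover have "3 * \<beta> * (1 / (2 * \<beta>)) = 3 / 2" using \<open>\<beta> \<noteq> 0\<close> by simp
  ultimately show ?thesis using assms(1) \<open>\<beta> \<noteq> 0\<close> by (simp add: field_simps)
qed

lemma depressed_cubic_roots_if_cofactor_irreducible:
  fixes \<beta> r :: "'a::field"
  assumes "(2::'a) \<noteq> 0" and r: "r^3 + 3 * \<beta> * r - 1 = 0"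
    and irreducible: "\<not> (\<exists>e. e^2 = r^2 - 4 * (r^2 + 3 * \<beta>))"
  shows "{s. s^3 + 3 * \<beta> * s - 1 = 0} = {r}" and "\<not> (\<exists>y. y^2 = -3 * (1 + 4 * \<beta>^3))"
proof -
  show "{s. s^3 + 3 * \<beta> * s - 1 = 0} = {r}"
    using depressed_cubic_roots_insert[OF r] quadratic_roots[OF assms(1), of r "r^2 + 3 * \<beta>"]
      irreducible by simp
  have "r^2 + \<beta> \<noteq> 0"
  proof
    assume "r^2 + \<beta> = 0"
    then have "\<beta> = - (r^2)" by (simp add: add_eq_0_iff)
    then have "(3 * r)^2 = r^2 - 4 * (r^2 + 3 * \<beta>)" by (simp add: algebra_simps power2_eq_square)
    with irreducible show False by blast
  qed
  show "\<not> (\<exists>y. y^2 = -3 * (1 + 4 * \<beta>^3))"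
  proof
    assume "\<exists>y. y^2 = -3 * (1 + 4 * \<beta>^3)"
    then obtain y where "y^2 = (r^2 + \<beta>)^2 * (r^2 - 4 * (r^2 + 3 * \<beta>))"
      using depressed_cubic_discriminant[OF r] by auto
    then have "(y / (r^2 + \<beta>))^2 = r^2 - 4 * (r^2 + 3 * \<beta>)"
      using \<open>r^2 + \<beta> \<noteq> 0\<close> by (simp add: power_divide)
    with irreducible show False by blast
  qed
qed

lemma card_depressed_cubic_roots_if_cofactor_splits:
  fixes \<beta> r e :: "'a::field"
  assumes two: "(2::'a) \<noteq> 0" and three: "(3::'a) \<noteq> 0" and r: "r^3 + 3 * \<beta> * r - 1 = 0"
    and e: "e^2 = r^2 - 4 * (r^2 + 3 * \<beta>)"
  shows "card {s. s^3 + 3 * \<beta> * s - 1 = 0} = (if 1 + 4 * \<beta>^3 = 0 then 2 else 3)"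
    and "\<exists>y. y^2 = -3 * (1 + 4 * \<beta>^3)"
proof -
  define u v where "u = (e - r) / 2" and "v = (-e - r) / 2"
  have "{e'. e'^2 = e^2} = {e, -e}" by (auto simp: power2_eq_iff)
  then have roots: "{s. s^3 + 3 * \<beta> * s - 1 = 0} = {r, u, v}"
    using depressed_cubic_roots_insert[OF r] quadratic_roots[OF two, of r "r^2 + 3 * \<beta>"] e
    by (simp add: u_def v_def)
  have square: "-3 * (1 + 4 * \<beta>^3) = ((r^2 + \<beta>) * e)^2"
    using depressed_cubic_discriminant[OF r] e by (simp add: power_mult_distrib)
  then show "\<exists>y. y^2 = -3 * (1 + 4 * \<beta>^3)" by metis
  have "(12::'a) \<noteq> 0" using two three by (metis mult_2 mult_eq_0_iff numeral_Bit0 one_add_one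
      numeral_times_numeral semiring_norm(12) semiring_norm(13))
  have "1 + 4 * \<beta>^3 = 0 \<longleftrightarrow> -3 * (1 + 4 * \<beta>^3) = 0"
    using three by (simp only: mult_eq_0_iff neg_equal_0_iff_equal simp_thms)
  also have "\<dots> \<longleftrightarrow> e = 0 \<or> r^2 + \<beta> = 0" by (simp only: square) auto
  also have "r^2 + \<beta> = 0 \<longleftrightarrow> e^2 = (3 * r)^2"
  proof -
    have "(3 * r)^2 - e^2 = 12 * (r^2 + \<beta>)" by (simp only: e) (simp add: algebra_simps power2_eq_square)
    with \<open>(12::'a) \<noteq> 0\<close> have "r^2 + \<beta> = 0 \<longleftrightarrow> (3 * r)^2 - e^2 = 0"
      by (simp only: mult_eq_0_iff simp_thms)
    then show ?thesis by (simp only: right_minus_eq eq_commute[of "(3 * r)^2"])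
  qed
  also have "\<dots> \<longleftrightarrow> e = 3 * r \<or> e = - (3 * r)" by (rule power2_eq_iff)
  finally have disc_zero: "1 + 4 * \<beta>^3 = 0 \<longleftrightarrow> e = 0 \<or> e = 3 * r \<or> e = - (3 * r)" .
  have "r \<noteq> 0" using r by auto
  with three have "3 * r \<noteq> 0" by simp
  then have "3 * r \<noteq> - (3 * r)" using two by (metis add_eq_0_iff mult_2 mult_eq_0_iff)
  moreover have "u = v \<longleftrightarrow> e = 0" using two by (auto simp: u_def v_def field_simps)
  moreover have "r = u \<longleftrightarrow> e = 3 * r" using two by (auto simp: u_def field_simps)
  moreover have "r = v \<longleftrightarrow> e = - (3 * r)"
    using two by (auto simp: v_def field_simps minus_equation_iff[of e])
  ultimately show "card {s. s^3 + 3 * \<beta> * s - 1 = 0} = (if 1 + 4 * \<beta>^3 = 0 then 2 else 3)"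
    using \<open>3 * r \<noteq> 0\<close> unfolding roots disc_zero by (auto simp: card_insert_if)
qed

lemma card_depressed_cubic_roots:
  fixes \<beta> :: "'a::field"
  assumes "(2::'a) \<noteq> 0" and "(3::'a) \<noteq> 0"
  shows "card {s. s^3 + 3 * \<beta> * s - 1 = 0} =
    (if \<not> (\<exists>s. s^3 + 3 * \<beta> * s - 1 = 0) then 0
     else if 1 + 4 * \<beta>^3 = 0 then 2
     else if \<exists>y. y^2 = -3 * (1 + 4 * \<beta>^3) then 3
     else 1)"
proof (cases "\<exists>s. s^3 + 3 * \<beta> * s - 1 = 0")
  case True
  then obtain r where r: "r^3 + 3 * \<beta> * r - 1 = 0" by blast
  show ?thesis
  proof (cases "\<exists>e. e^2 = r^2 - 4 * (r^2 + 3 * \<beta>)")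
    case False
    then have "{s. s^3 + 3 * \<beta> * s - 1 = 0} = {r}" and nonsquare: "\<not> (\<exists>y. y^2 = -3 * (1 + 4 * \<beta>^3))"
      using depressed_cubic_roots_if_cofactor_irreducible[OF assms(1) r] by blast+
    moreover from nonsquare have "1 + 4 * \<beta>^3 \<noteq> 0" by force
    ultimately show ?thesis using r by auto
  next
    case True
    with card_depressed_cubic_roots_if_cofactor_splits[OF assms r] show ?thesis
      using r by auto
  qed
qed simp

lemma depressed_cubic_root_if_square_discriminant:
  fixes \<beta> f :: "'a::field"
  assumes "surj (\<lambda>x::'a. x^3)" and "(2::'a) \<noteq> 0" and "f^2 = 1 + 4 * \<beta>^3"
  shows "\<exists>s. s^3 + 3 * \<beta> * s - 1 = 0"
proof (cases "\<beta> = 0")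
  case False
  define w where "w = (1 + f) / 2"
  have "(4::'a) \<noteq> 0" using assms(2) by (metis mult_2 mult_eq_0_iff numeral_Bit0 one_add_one)
  have "2 * w = 1 + f" using assms(2) by (simp add: w_def)
  have "4 * (w^2 - w - \<beta>^3) = (2 * w)^2 - 2 * (2 * w) - 4 * \<beta>^3"
    by (simp add: algebra_simps power2_eq_square)
  also have "\<dots> = f^2 - (1 + 4 * \<beta>^3)"
    unfolding \<open>2 * w = 1 + f\<close> by (simp add: algebra_simps power2_eq_square)
  also have "\<dots> = 0" using assms(3) by simp
  finally have w: "w^2 - w - \<beta>^3 = 0" using \<open>(4::'a) \<noteq> 0\<close> by (simp only: mult_eq_0_iff simp_thms)
  with False have "w \<noteq> 0" by auto
  obtain u where u: "u^3 = w" using assms(1) by (metis surjD)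
  with \<open>w \<noteq> 0\<close> have "u \<noteq> 0" by auto
  have "(u - \<beta> / u)^3 + 3 * \<beta> * (u - \<beta> / u) - 1 = u^3 - \<beta>^3 / u^3 - 1"
    using \<open>u \<noteq> 0\<close> by (simp add: field_simps power2_eq_square power3_eq_cube)
  also have "\<dots> = (w^2 - w - \<beta>^3) / w"
    using u \<open>w \<noteq> 0\<close> by (simp add: field_simps power2_eq_square)
  finally show ?thesis using w by auto
qed (intro exI[of _ 1], simp)

section \<open>Cardano's formula in a quadratic extension\<close>

text \<open>A pair \<open>(a, b)\<close> stands for \<open>a + b sqrt D\<close>; for a non-square \<open>D\<close> these pairs form the field
  \<open>F(sqrt D)\<close>, with norm \<open>qnorm D\<close> and conjugation \<open>qcnj\<close>.\<close>

definition qmul :: "'a::field \<Rightarrow> 'a \<times> 'a \<Rightarrow> 'a \<times> 'a \<Rightarrow> 'a \<times> 'a" where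
  "qmul D x y = (fst x * fst y + D * snd x * snd y, fst x * snd y + snd x * fst y)"

definition qnorm :: "'a::field \<Rightarrow> 'a \<times> 'a \<Rightarrow> 'a" where
  "qnorm D x = fst x ^ 2 - D * snd x ^ 2"

definition qcnj :: "'a::field \<times> 'a \<Rightarrow> 'a \<times> 'a" where
  "qcnj x = (fst x, - snd x)"

definition qcube :: "'a::field \<Rightarrow> 'a \<times> 'a \<Rightarrow> 'a \<times> 'a" where
  "qcube D x = qmul D (qmul D x x) x"

interpretation qmul: Groups.comm_monoid "qmul D" "(1, 0)"
  by unfold_locales (simp_all add: qmul_def algebra_simps)

lemma qnorm_qmul: "qnorm D (qmul D x y) = qnorm D x * qnorm D y"
  by (simp add: qnorm_def qmul_def algebra_simps power2_eq_square)

lemma qnorm_qcnj: "qnorm D (qcnj x) = qnorm D x"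
  by (simp add: qnorm_def qcnj_def)

lemma qmul_qcnj: "qmul D x (qcnj x) = (qnorm D x, 0)"
  by (simp add: qmul_def qcnj_def qnorm_def power2_eq_square algebra_simps)

lemma qcube_qmul: "qcube D (qmul D x y) = qmul D (qcube D x) (qcube D y)"
  by (simp add: qcube_def ac_simps)

lemma qcube_qcnj: "qcube D (qcnj x) = qcnj (qcube D x)"
  by (simp add: qcube_def qmul_def qcnj_def algebra_simps)

lemma qnorm_qcube: "qnorm D (qcube D x) = qnorm D x ^ 3"
  by (simp add: qcube_def qnorm_qmul power3_eq_cube)

lemma qcube_eq_one_imp_eq_one:
  fixes D :: "'a::field"
  assumes "\<not> (\<exists>y. y^2 = D)" and "\<exists>e::'a. e^2 = -3"
    and "qnorm D x = 1" and "qcube D x = (1, 0)"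
  shows "x = (1, 0)"
proof -
  obtain a b where x: "x = (a, b)" by fastforce
  have "b * (3 * a^2 + D * b^2) = snd (qcube D x)"
    by (simp add: x qcube_def qmul_def algebra_simps power2_eq_square)
  then have "b = 0 \<or> D * b^2 = -3 * a^2" using assms(4) by (auto simp: eq_neg_iff_add_eq_0 add.commute)
  moreover have "D * b^2 \<noteq> -3 * a^2" if "b \<noteq> 0"
  proof
    assume "D * b^2 = -3 * a^2"
    moreover obtain e :: 'a where "e^2 = -3" using assms(2) by blast
    ultimately have "(e * a / b)^2 = D * b^2 / b^2" by (simp add: power_divide power_mult_distrib)
    then have "(e * a / b)^2 = D" using that by simp
    with assms(1) show False by blast
  qed
  moreover have "a = 1" if "b = 0"
  proof -
    have "a^2 = 1" "a^3 = 1"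
      using assms(3,4) that by (simp_all add: x qnorm_def qcube_def qmul_def power3_eq_cube power2_eq_square)
    then have "a = a * a^2" by simp
    also have "\<dots> = a^3" by (simp add: power3_eq_cube power2_eq_square)
    finally show "a = 1" using \<open>a^3 = 1\<close> by simp
  qed
  ultimately show ?thesis using x by blast
qed

lemma inj_on_qcube_norm_one:
  fixes D :: "'a::field"
  assumes "\<not> (\<exists>y. y^2 = D)" and "\<exists>e::'a. e^2 = -3"
  shows "inj_on (qcube D) {x. qnorm D x = 1}"
proof (rule inj_onI)
  fix x y assume "x \<in> {x. qnorm D x = 1}" "y \<in> {x. qnorm D x = 1}" and xy: "qcube D x = qcube D y"
  then have norms: "qnorm D x = 1" "qnorm D y = 1" by simp_all
  define z where "z = qmul D x (qcnj y)"
  have "qnorm D z = 1" using norms by (simp add: z_def qnorm_qmul qnorm_qcnj)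
  moreover have "qcube D z = (1, 0)"
    using norms by (simp add: z_def qcube_qmul qcube_qcnj xy qmul_qcnj qnorm_qcube)
  ultimately have "z = (1, 0)" using qcube_eq_one_imp_eq_one[OF assms] by blast
  then have "qmul D z y = y" by simp
  moreover have "qmul D z y = x"
    using norms by (simp add: z_def qmul.assoc qmul.commute[of D "qcnj y"] qmul_qcnj)
  ultimately show "x = y" by simp
qed

lemma ex_qcube_root_norm_one:
  fixes D :: "'a::{finite,field}"
  assumes "\<not> (\<exists>y. y^2 = D)" and "\<exists>e::'a. e^2 = -3" and "qnorm D t = 1"
  shows "\<exists>z. qnorm D z = 1 \<and> qcube D z = t"
proof -
  have "qcube D ` {x. qnorm D x = 1} = {x. qnorm D x = 1}"
    by (intro endo_inj_surj inj_on_qcube_norm_one[OF assms(1,2)]) (auto simp: qnorm_qcube)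
  then show ?thesis using assms(3) by (metis (mono_tags, lifting) imageE mem_Collect_eq)
qed

lemma ex_qmul_norm_one:
  assumes "qnorm D x = qnorm D y" and "qnorm D x \<noteq> 0"
  shows "\<exists>t. qnorm D t = 1 \<and> qmul D x t = y"
proof -
  define t where "t = qmul D (qmul D y (qcnj x)) (1 / qnorm D x, 0)"
  have "qnorm D t = 1"
    using assms by (simp add: t_def qnorm_qmul qnorm_qcnj) (simp add: qnorm_def power2_eq_square)
  moreover have "qmul D x t = y"
  proof -
    have "qmul D x t = qmul D y (qmul D (qmul D x (qcnj x)) (1 / qnorm D x, 0))"
      by (simp add: t_def ac_simps)
    also have "\<dots> = y" using assms(2) by (simp add: qmul_qcnj) (simp add: qmul_def)
    finally show ?thesis .
  qed
  ultimately show ?thesis by blast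
qed

text \<open>If \<open>u\<close> has norm \<open>-\<beta>\<close> and \<open>u^3 = (1 + sqrt D) / 2\<close>, then \<open>u + qcnj u = 2 fst u\<close> is a root.
  Such a \<open>u\<close> is \<open>v z\<close>, where \<open>v\<close> is any element of norm \<open>-\<beta>\<close> and \<open>z\<close> is a cube root of
  \<open>(1 + sqrt D) / (2 v^3)\<close> in the norm-one group.\<close>

lemma depressed_cubic_root_if_nonsquare_discriminant:
  fixes \<beta> :: "'a::{finite,field}"
  assumes "(2::'a) \<noteq> 0" and "\<exists>e::'a. e^2 = -3" and nonsquare: "\<not> (\<exists>y. y^2 = 1 + 4 * \<beta>^3)"
  shows "\<exists>s. s^3 + 3 * \<beta> * s - 1 = 0"
proof -
  define D where "D = 1 + 4 * \<beta>^3"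
  have nonsquare_D: "\<not> (\<exists>y. y^2 = D)" using nonsquare by (simp add: D_def)
  have "D \<noteq> 0" "\<beta> \<noteq> 0" using nonsquare by (auto simp: D_def) (metis one_power2)
  have "(4::'a) \<noteq> 0" using assms(1) by (metis mult_2 mult_eq_0_iff numeral_Bit0 one_add_one)
  obtain a b where ab: "a^2 - D * b^2 = -\<beta>"
    using ex_square_minus_mult_square[OF assms(1) \<open>D \<noteq> 0\<close>] by blast
  define v where "v = (a, b)"
  have v: "qnorm D v = -\<beta>" using ab by (simp add: v_def qnorm_def)
  define w :: "'a \<times> 'a" where "w = (1 / 2, 1 / 2)"
  have "qnorm D w = - (\<beta>^3)"
    using \<open>(4::'a) \<noteq> 0\<close> by (simp add: w_def qnorm_def D_def power2_eq_square field_simps)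
  moreover have "qnorm D (qcube D v) = - (\<beta>^3)" by (simp add: qnorm_qcube v)
  ultimately obtain t where t: "qnorm D t = 1" "qmul D (qcube D v) t = w"
    using ex_qmul_norm_one[of D "qcube D v" w] \<open>\<beta> \<noteq> 0\<close> by auto
  then obtain z where z: "qnorm D z = 1" "qcube D z = t"
    using ex_qcube_root_norm_one[OF nonsquare_D assms(2) t(1)] by blast
  obtain x y where u: "qmul D v z = (x, y)" by fastforce
  have "qnorm D (qmul D v z) = -\<beta>" by (simp add: qnorm_qmul v z)
  then have norm: "x^2 - D * y^2 = -\<beta>" by (simp add: u qnorm_def)
  have cube: "x^3 + 3 * D * x * y^2 = 1 / 2"
  proof -
    have "qcube D (x, y) = w" using u[symmetric] by (simp add: qcube_qmul z t)
    then have "fst (qcube D (x, y)) = 1 / 2" by (simp add: w_def)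
    moreover have "fst (qcube D (x, y)) = x^3 + 3 * D * x * y^2"
      by (simp add: qcube_def qmul_def algebra_simps power2_eq_square power3_eq_cube)
    ultimately show ?thesis by simp
  qed
  have "(2 * x)^3 + 3 * \<beta> * (2 * x) - 1
      = 2 * (x^3 + 3 * D * x * y^2) - 1 + 6 * x * (x^2 - D * y^2 + \<beta>)"
    by (simp add: algebra_simps power2_eq_square power3_eq_cube)
  also have "\<dots> = 0" using assms(1) by (simp only: norm cube) simp
  finally have "(2 * x)^3 + 3 * \<beta> * (2 * x) - 1 = 0" .
  then show ?thesis by blast
qed

section \<open>The counts \<open>V 1\<close> and \<open>V 2\<close>\<close>

lemma card_cubic_sols:
  fixes \<beta> :: "'a::field"
  shows "card (cubic_sols \<beta>) = card {s. s^3 + 3 * \<beta> * s - 1 = 0}"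
proof -
  have "t \<in> cubic_sols \<beta> \<longleftrightarrow> inverse t \<in> {s. s^3 + 3 * \<beta> * s - 1 = 0}" for t :: 'a
  proof (cases "t = 0")
    case False
    then have eq: "t^3 - 3 * \<beta> * t^2 - 1 = - (t^3) * ((inverse t)^3 + 3 * \<beta> * inverse t - 1)"
      by (simp add: field_simps power2_eq_square power3_eq_cube)
    from False have "t^3 \<noteq> 0" by simp
    then show ?thesis unfolding cubic_sols_def mem_Collect_eq
      by (simp only: eq mult_eq_0_iff neg_equal_0_iff_equal simp_thms)
  qed (simp add: cubic_sols_def)
  then have "cubic_sols \<beta> = inverse -` {s. s^3 + 3 * \<beta> * s - 1 = 0}" by auto
  moreover have "inj (inverse :: 'a \<Rightarrow> 'a)" "surj (inverse :: 'a \<Rightarrow> 'a)"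
    by (metis inverse_inverse_eq injI, metis inverse_inverse_eq surjI)
  ultimately show ?thesis by (simp only: card_vimage_inj subset_UNIV)
qed

lemma card_depressed_cubic_roots_eq_2_iff:
  fixes \<beta> :: "'a::field"
  assumes "(2::'a) \<noteq> 0" and "(3::'a) \<noteq> 0"
  shows "card {s. s^3 + 3 * \<beta> * s - 1 = 0} = 2 \<longleftrightarrow> 1 + 4 * \<beta>^3 = 0"
proof -
  have "1 + 4 * \<beta>^3 = 0 \<Longrightarrow> \<exists>s. s^3 + 3 * \<beta> * s - 1 = 0"
    using depressed_cubic_root_if_discriminant_zero[OF assms(1)] by blast
  then show ?thesis unfolding card_depressed_cubic_roots[OF assms] by auto
qed

lemma card_depressed_cubic_roots_eq_1_iff:
  fixes \<beta> :: "'a::field"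
  assumes "(2::'a) \<noteq> 0" and "(3::'a) \<noteq> 0"
  shows "card {s. s^3 + 3 * \<beta> * s - 1 = 0} = 1 \<longleftrightarrow>
    (\<exists>s. s^3 + 3 * \<beta> * s - 1 = 0) \<and> \<not> (\<exists>y. y^2 = -3 * (1 + 4 * \<beta>^3))"
proof -
  have "\<not> (\<exists>y. y^2 = -3 * (1 + 4 * \<beta>^3)) \<Longrightarrow> 1 + 4 * \<beta>^3 \<noteq> 0" by force
  then show ?thesis unfolding card_depressed_cubic_roots[OF assms] by auto
qed

lemma card_depressed_cubic_roots_eq_1_iff_square:
  fixes \<beta> :: "'a::{finite,field}"
  assumes surj: "surj (\<lambda>x::'a. x^3)" and two: "(2::'a) \<noteq> 0"
    and minus_three: "\<not> (\<exists>e::'a. e^2 = -3)"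
  shows "card {s. s^3 + 3 * \<beta> * s - 1 = 0} = 1 \<longleftrightarrow>
    1 + 4 * \<beta>^3 \<noteq> 0 \<and> (\<exists>y. y^2 = 1 + 4 * \<beta>^3)"
proof -
  have "(3::'a) \<noteq> 0" using minus_three by force
  have "(\<exists>y. y^2 = -3 * (1 + 4 * \<beta>^3)) \<longleftrightarrow> \<not> (\<exists>y. y^2 = 1 + 4 * \<beta>^3) \<or> 1 + 4 * \<beta>^3 = 0"
  proof
    assume "\<exists>y. y^2 = -3 * (1 + 4 * \<beta>^3)"
    then obtain y where y: "y^2 = -3 * (1 + 4 * \<beta>^3)" ..
    show "\<not> (\<exists>y. y^2 = 1 + 4 * \<beta>^3) \<or> 1 + 4 * \<beta>^3 = 0"
    proof (rule ccontr)
      assume "\<not> ?thesis"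
      then obtain f where f: "f^2 = 1 + 4 * \<beta>^3" and "f \<noteq> 0" by (metis zero_power2)
      with y have "y^2 = -3 * f^2" by simp
      with \<open>f \<noteq> 0\<close> have "(y / f)^2 = -3" by (simp add: power_divide)
      with minus_three show False by blast
    qed
  next
    assume "\<not> (\<exists>y. y^2 = 1 + 4 * \<beta>^3) \<or> 1 + 4 * \<beta>^3 = 0"
    then show "\<exists>y. y^2 = -3 * (1 + 4 * \<beta>^3)"
    proof
      assume "\<not> (\<exists>y. y^2 = 1 + 4 * \<beta>^3)"
      then show ?thesis using nonsquare_mult_nonsquare[OF two minus_three] by blast
    qed (intro exI[of _ 0], simp)
  qed
  then show ?thesis
    using card_depressed_cubic_roots_eq_1_iff[OF two \<open>(3::'a) \<noteq> 0\<close>]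
      depressed_cubic_root_if_square_discriminant[OF surj two] by blast
qed

lemma card_depressed_cubic_roots_eq_1_iff_nonsquare:
  fixes \<beta> :: "'a::{finite,field}"
  assumes two: "(2::'a) \<noteq> 0" and three: "(3::'a) \<noteq> 0" and "\<exists>e::'a. e^2 = -3"
  shows "card {s. s^3 + 3 * \<beta> * s - 1 = 0} = 1 \<longleftrightarrow> \<not> (\<exists>y. y^2 = 1 + 4 * \<beta>^3)"
proof -
  obtain e :: 'a where e: "e^2 = -3" using assms(3) ..
  with three have "e \<noteq> 0" by auto
  have "(\<exists>y. y^2 = -3 * (1 + 4 * \<beta>^3)) \<longleftrightarrow> (\<exists>y. y^2 = 1 + 4 * \<beta>^3)"
  proof
    assume "\<exists>y. y^2 = -3 * (1 + 4 * \<beta>^3)"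
    then obtain y where "y^2 = e^2 * (1 + 4 * \<beta>^3)" using e by auto
    then have "(y / e)^2 = 1 + 4 * \<beta>^3" using \<open>e \<noteq> 0\<close> by (simp add: power_divide)
    then show "\<exists>y. y^2 = 1 + 4 * \<beta>^3" ..
  next
    assume "\<exists>y. y^2 = 1 + 4 * \<beta>^3"
    then obtain y where "y^2 = 1 + 4 * \<beta>^3" ..
    then have "(e * y)^2 = -3 * (1 + 4 * \<beta>^3)" using e by (simp add: power_mult_distrib)
    then show "\<exists>y. y^2 = -3 * (1 + 4 * \<beta>^3)" ..
  qed
  then show ?thesis
    using card_depressed_cubic_roots_eq_1_iff[OF two three]
      depressed_cubic_root_if_nonsquare_discriminant[OF two assms(3)] by blast
qed

lemma V_eq_card_depressed_cubic_roots:
  "V TYPE('a::{finite,field}) m = card {\<beta>::'a. card {s. s^3 + 3 * \<beta> * s - 1 = 0} = m}"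
  by (simp add: V_def card_cubic_sols)

lemma V_two_eq_card_cube_roots_of_two:
  assumes "(2::'a::{finite,field}) \<noteq> 0" and "(3::'a) \<noteq> 0"
  shows "V TYPE('a) 2 = card {x::'a. x^3 = 2}"
proof -
  have "V TYPE('a) 2 = card {\<beta>::'a. 1 + 4 * \<beta>^3 = 0}"
    unfolding V_eq_card_depressed_cubic_roots card_depressed_cubic_roots_eq_2_iff[OF assms] ..
  also have "{\<beta>::'a. 1 + 4 * \<beta>^3 = 0} = (\<lambda>\<beta>. -2 * \<beta>) -` {x. x^3 = 2}"
  proof -
    have "(-2 * \<beta>)^3 = 2 \<longleftrightarrow> 1 + 4 * \<beta>^3 = 0" for \<beta> :: 'a
    proof -
      have "(-2 * \<beta>)^3 - 2 = -2 * (1 + 4 * \<beta>^3)" by (simp add: algebra_simps power_mult_distrib)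
      then have "(-2 * \<beta>)^3 = 2 \<longleftrightarrow> -2 * (1 + 4 * \<beta>^3) = 0"
        by (simp only: eq_iff_diff_eq_0[of "(-2 * \<beta>)^3"])
      then show ?thesis using assms(1) by (simp only: mult_eq_0_iff neg_equal_0_iff_equal simp_thms)
    qed
    then show ?thesis by auto
  qed
  also have "card \<dots> = card {x::'a. x^3 = 2}"
  proof (rule card_vimage_inj)
    show "inj (\<lambda>\<beta>::'a. -2 * \<beta>)" using assms(1) by (auto intro: injI)
    have "x = -2 * (- x / 2)" for x :: 'a using assms(1) by simp
    then show "{x. x^3 = 2} \<subseteq> range (\<lambda>\<beta>::'a. -2 * \<beta>)" by blast
  qed
  finally show ?thesis .
qed

lemma V_one_if_card_mod_3_eq_2:
  assumes q: "CARD('a::{finite,field}) mod 3 = 2" and two: "(2::'a) \<noteq> 0"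
  shows "V TYPE('a) 1 = (CARD('a) - 1) div 2"
proof -
  have "(3::'a) \<noteq> 0" using of_nat_prime_neq_zero[of 3, where 'a='a] q by (auto simp: dvd_eq_mod_eq_0)
  have four: "(4::'a) \<noteq> 0" using two by (metis mult_2 mult_eq_0_iff numeral_Bit0 one_add_one)
  have inj: "inj (\<lambda>x::'a. x^3)" using inj_cube cube_root_of_unity_eq_one[OF q] by blast
  then have surj: "surj (\<lambda>x::'a. x^3)" by (simp add: finite_UNIV_inj_surj)
  have minus_three: "\<not> (\<exists>e::'a. e^2 = -3)"
    using minus_three_square_iff[OF two \<open>(3::'a) \<noteq> 0\<close>] cube_root_of_unity_eq_one[OF q] by blast
  have "V TYPE('a) 1 = card {\<beta>::'a. 1 + 4 * \<beta>^3 \<noteq> 0 \<and> (\<exists>y. y^2 = 1 + 4 * \<beta>^3)}"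
    unfolding V_eq_card_depressed_cubic_roots
      card_depressed_cubic_roots_eq_1_iff_square[OF surj two minus_three] ..
  also have "\<dots> = card ((\<lambda>\<beta>::'a. 1 + 4 * \<beta>^3) -` {y. y \<noteq> 0 \<and> (\<exists>z. z^2 = y)})"
    by (simp add: vimage_def)
  also have "\<dots> = card {y::'a. y \<noteq> 0 \<and> (\<exists>z. z^2 = y)}"
  proof (rule card_vimage_inj)
    show "inj (\<lambda>\<beta>::'a. 1 + 4 * \<beta>^3)"
    proof (rule injI)
      fix a b :: 'a assume "1 + 4 * a^3 = 1 + 4 * b^3"
      with four have "a^3 = b^3" by simp
      with inj show "a = b" by (auto dest: injD)
    qed
    have "y \<in> range (\<lambda>\<beta>::'a. 1 + 4 * \<beta>^3)" for y :: 'a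
    proof -
      obtain b where "(y - 1) / 4 = b^3" using surj by (metis surjD)
      with four have "y = 1 + 4 * b^3" by (simp add: field_simps)
      then show ?thesis by blast
    qed
    then show "{y. y \<noteq> 0 \<and> (\<exists>z. z^2 = y)} \<subseteq> range (\<lambda>\<beta>::'a. 1 + 4 * \<beta>^3)" by blast
  qed
  also have "\<dots> = (CARD('a) - 1) div 2" using card_nonzero_squares[OF two] by simp
  finally show ?thesis .
qed

lemma V_one_if_card_mod_3_eq_1:
  assumes q: "CARD('a::{finite,field}) mod 3 = 1" and two: "(2::'a) \<noteq> 0"
  shows "V TYPE('a) 1 = N TYPE('a)"
proof -
  have three: "(3::'a) \<noteq> 0" using of_nat_prime_neq_zero[of 3, where 'a='a] q by (auto simp: dvd_eq_mod_eq_0)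
  have minus_three: "\<exists>e::'a. e^2 = -3"
    using minus_three_square_iff[OF two three] nontrivial_cube_root_of_unity_exists[OF q] by blast
  show ?thesis
    unfolding V_eq_card_depressed_cubic_roots N_def
      card_depressed_cubic_roots_eq_1_iff_nonsquare[OF two three minus_three] ..
qed

theorem lemma4p4:
  assumes "card (UNIV::'a::{finite,field} set) \<ge> 5" and "odd CARD('a)"
  shows "(CARD('a) mod 3 = 2 \<longrightarrow>
            V TYPE('a) 2 = 1 \<and> V TYPE('a) 1 = (CARD('a) - 1) div 2)
       \<and> (CARD('a) mod 3 = 1 \<and> \<not> (\<exists>c::'a. c^3 = 2) \<longrightarrow>
            V TYPE('a) 2 = 0 \<and> V TYPE('a) 1 = N TYPE('a))
       \<and> (CARD('a) mod 3 = 1 \<and> (\<exists>c::'a. c^3 = 2) \<longrightarrow>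
            V TYPE('a) 2 = 3 \<and> V TYPE('a) 1 = N TYPE('a))"
proof -
  have two: "(2::'a) \<noteq> 0" using of_nat_prime_neq_zero[of 2, where 'a='a] assms(2) by auto
  have V2: "V TYPE('a) 2 = card {x::'a. x^3 = 2}" if "CARD('a) mod 3 \<noteq> 0"
    using V_two_eq_card_cube_roots_of_two[OF two] of_nat_prime_neq_zero[of 3, where 'a='a] that
    by (auto simp: dvd_eq_mod_eq_0)
  have "card {x::'a. x^3 = 2} = 1" if q: "CARD('a) mod 3 = 2"
  proof -
    have "inj (\<lambda>x::'a. x^3)" using inj_cube cube_root_of_unity_eq_one[OF q] by blast
    moreover from this have "surj (\<lambda>x::'a. x^3)" by (simp add: finite_UNIV_inj_surj)
    ultimately show ?thesis using card_vimage_inj[of "\<lambda>x::'a. x^3" "{2}"] by (simp add: vimage_def)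
  qed
  moreover have "card {x::'a. x^3 = 2} = 3" if q: "CARD('a) mod 3 = 1" and "c^3 = 2" for c :: 'a
  proof -
    obtain \<omega> :: 'a where "\<omega>^3 = 1" "\<omega> \<noteq> 1" using nontrivial_cube_root_of_unity_exists[OF q] by blast
    moreover have "c \<noteq> 0" using \<open>c^3 = 2\<close> two by auto
    ultimately show ?thesis using card_cube_roots[OF \<open>c^3 = 2\<close>] card_cube_roots_of_unity by simp
  qed
  ultimately show ?thesis
    using V2 V_one_if_card_mod_3_eq_2[OF _ two] V_one_if_card_mod_3_eq_1[OF _ two] by auto
qed

end
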